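(* Let $S$ be an entropy function for a finite set $X$, let $X'\subset X$, let $R$ be a new element not in $X$, $Y:=X'\cup\{R\}$, and let $T$ be the entropy function on $Y$ defined by $T(A):=S(A)$ and $T(A\cup\{R\}):=S(A\cup(X\setminus X'))$ for $A\subseteq X'$. Given any EDF $g$ for $T$, there exists an EDF $f$ for $S$ with $f(x)=g(x)$ for all $x\in X'$ and $\sum_{x\in X\setminus X'}f(x)=g(R)$.
   Context: An entropy function for a finite set $X$ is a function $S:2^X\to[0,\infty)$ with $S(\emptyset)=0$, $S(A)+S(B)\ge S(A\cap B)+S(A\cup B)$ and $S(A)+S(B)\ge S(A\setminus B)+S(B\setminus A)$ for all $A,B\subseteq X$. An entanglement distribution function (EDF) for $S$ is a function $f:X\to\mathbb R$ with $\big|\sum_{x\in A}f(x)\big|\le S(A)$ for all $A\subseteq X$. *)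

theory Defs
  imports Main "HOL.Real"
begin

definition entropy_function :: "'a set \<Rightarrow> ('a set \<Rightarrow> real) \<Rightarrow> bool" where
  "entropy_function X S \<longleftrightarrow> finite X \<and> S {} = 0 \<and>
     (\<forall>A. A \<subseteq> X \<longrightarrow> S A \<ge> 0) \<and>
     (\<forall>A B. A \<subseteq> X \<longrightarrow> B \<subseteq> X \<longrightarrow> S A + S B \<ge> S (A \<inter> B) + S (A \<union> B)) \<and>
     (\<forall>A B. A \<subseteq> X \<longrightarrow> B \<subseteq> X \<longrightarrow> S A + S B \<ge> S (A - B) + S (B - A))"

definition EDF :: "'a set \<Rightarrow> ('a set \<Rightarrow> real) \<Rightarrow> ('a \<Rightarrow> real) \<Rightarrow> bool" where
  "EDF X S f \<longleftrightarrow> (\<forall>A. A \<subseteq> X \<longrightarrow> \<bar>\<Sum>x\<in>A. f x\<bar> \<le> S A)"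

definition merged_entropy :: "'a set \<Rightarrow> 'a set \<Rightarrow> 'a \<Rightarrow> ('a set \<Rightarrow> real) \<Rightarrow> 'a set \<Rightarrow> real" where
  "merged_entropy X X' R S B =
     (if R \<in> B then S ((B - {R}) \<union> (X - X')) else S B)"

end

theory Submission
  imports Defs
begin

text \<open>The elements of \<open>X - X'\<close> are split off the merged element one at a time. If
  \<open>g\<close> is an EDF on \<open>X'\<close> together with a block \<open>insert z Z\<close> carrying total weight \<open>r\<close>,
  a value \<open>t\<close> for \<open>z\<close> must satisfy \<open>\<bar>g(A) + t\<bar> \<le> S(A + z)\<close> and
  \<open>\<bar>g(A) + r - t\<bar> \<le> S(A \<union> Z)\<close> for every \<open>A \<subseteq> X'\<close>. These are finitely many
  intervals on the real line, and submodularity and weak monotonicity of \<open>S\<close>, applied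
  to the sets \<open>A + z\<close>, \<open>B + z\<close>, \<open>A \<union> Z\<close>, \<open>B \<union> Z\<close>, show that any two of them meet;
  hence all of them have a common point.\<close>

lemma entropy_function_finite: "entropy_function X S \<Longrightarrow> finite X"
  unfolding entropy_function_def by blast

lemma entropy_function_submodular:
  assumes "entropy_function X S" "A \<subseteq> X" "B \<subseteq> X"
  shows "S (A \<inter> B) + S (A \<union> B) \<le> S A + S B"
  using assms unfolding entropy_function_def by blast

lemma entropy_function_weakly_monotone:
  assumes "entropy_function X S" "A \<subseteq> X" "B \<subseteq> X"
  shows "S (A - B) + S (B - A) \<le> S A + S B"
  using assms unfolding entropy_function_def by blast

lemma pairwise_meeting_intervals_common_point:
  fixes l u :: "'i \<Rightarrow> 'b::linorder"
  assumes "finite I" "\<And>i j. i \<in> I \<Longrightarrow> j \<in> I \<Longrightarrow> l i \<le> u j"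
  shows "\<exists>t. \<forall>i\<in>I. l i \<le> t \<and> t \<le> u i"
proof (cases "I = {}")
  case False
  show ?thesis
  proof (intro exI ballI conjI)
    fix i assume "i \<in> I"
    then show "l i \<le> Max (l ` I)" using assms(1) by simp
    have "Max (l ` I) \<in> l ` I" using assms(1) False by simp
    then show "Max (l ` I) \<le> u i" using assms(2) \<open>i \<in> I\<close> by auto
  qed
qed simp

text \<open>\<open>EDF_with_block S X' Z g r\<close> says that \<open>g\<close> on \<open>X'\<close>, together with the value \<open>r\<close>
  on the block \<open>Z\<close> treated as a single merged element, is an EDF for the merged entropy.\<close>
definition EDF_with_block ::
    "('a set \<Rightarrow> real) \<Rightarrow> 'a set \<Rightarrow> 'a set \<Rightarrow> ('a \<Rightarrow> real) \<Rightarrow> real \<Rightarrow> bool" where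
  "EDF_with_block S X' Z g r \<longleftrightarrow>
     (\<forall>A. A \<subseteq> X' \<longrightarrow> \<bar>sum g A\<bar> \<le> S A \<and> \<bar>sum g A + r\<bar> \<le> S (A \<union> Z))"

lemma EDF_merged_entropy_imp_EDF_with_block:
  assumes "finite X'" "R \<notin> X'" "EDF (insert R X') (merged_entropy X X' R S) g"
  shows "EDF_with_block S X' (X - X') g (g R)"
  unfolding EDF_with_block_def
proof (intro allI impI conjI)
  fix A assume A: "A \<subseteq> X'"
  then have "R \<notin> A" "finite A" using assms(1,2) by (auto intro: finite_subset)
  have "\<bar>sum g A\<bar> \<le> merged_entropy X X' R S A"
    using assms(3) A unfolding EDF_def by blast
  then show "\<bar>sum g A\<bar> \<le> S A"
    using \<open>R \<notin> A\<close> by (simp add: merged_entropy_def)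
  have "\<bar>sum g (insert R A)\<bar> \<le> merged_entropy X X' R S (insert R A)"
    using assms(3) A unfolding EDF_def by blast
  then show "\<bar>sum g A + g R\<bar> \<le> S (A \<union> (X - X'))"
    using \<open>R \<notin> A\<close> \<open>finite A\<close> by (simp add: merged_entropy_def add.commute)
qed

lemma EDF_with_block_pair_bounds:
  assumes ent: "entropy_function X S"
    and sub: "X' \<union> insert z Z \<subseteq> X" and disj: "X' \<inter> insert z Z = {}" and "z \<notin> Z"
    and blk: "EDF_with_block S X' (insert z Z) g r"
    and A: "A \<subseteq> X'" and B: "B \<subseteq> X'"
  shows "sum g B - sum g A \<le> S (insert z A) + S (insert z B)"
    and "sum g A - sum g B \<le> S (A \<union> Z) + S (B \<union> Z)"
    and "\<bar>sum g A + sum g B + r\<bar> \<le> S (insert z A) + S (B \<union> Z)"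
proof -
  have fin: "finite A" "finite B"
    using A B sub entropy_function_finite[OF ent] by (auto intro: finite_subset)
  have "A - B \<subseteq> X'" "B - A \<subseteq> X'" "A \<inter> B \<subseteq> X'" "A \<union> B \<subseteq> X'" using A B by auto
  then have bounds: "\<bar>sum g (A - B)\<bar> \<le> S (A - B)" "\<bar>sum g (B - A)\<bar> \<le> S (B - A)"
      "\<bar>sum g (A \<inter> B)\<bar> \<le> S (A \<inter> B)" "\<bar>sum g (A \<union> B) + r\<bar> \<le> S (A \<union> B \<union> insert z Z)"
    using blk unfolding EDF_with_block_def by blast+
  have diff: "sum g B - sum g A = sum g (B - A) - sum g (A - B)"
    using sum.Int_Diff[OF fin(1), of g B] sum.Int_Diff[OF fin(2), of g A]
    by (simp add: Int_commute)
  have union_inter: "sum g A + sum g B = sum g (A \<union> B) + sum g (A \<inter> B)"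
    using sum.union_inter[OF fin, of g] by linarith
  have "S (insert z B - insert z A) + S (insert z A - insert z B) \<le> S (insert z B) + S (insert z A)"
    using A B sub by (intro entropy_function_weakly_monotone[OF ent]) auto
  moreover have "insert z B - insert z A = B - A" "insert z A - insert z B = A - B"
    using A B disj by auto
  ultimately show "sum g B - sum g A \<le> S (insert z A) + S (insert z B)"
    using diff bounds(1,2) by auto
  have "S ((A \<union> Z) - (B \<union> Z)) + S ((B \<union> Z) - (A \<union> Z)) \<le> S (A \<union> Z) + S (B \<union> Z)"
    using A B sub by (intro entropy_function_weakly_monotone[OF ent]) auto
  moreover have "(A \<union> Z) - (B \<union> Z) = A - B" "(B \<union> Z) - (A \<union> Z) = B - A"
    using A B disj by auto
  ultimately show "sum g A - sum g B \<le> S (A \<union> Z) + S (B \<union> Z)"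
    using diff bounds(1,2) by auto
  have "S (insert z A \<inter> (B \<union> Z)) + S (insert z A \<union> (B \<union> Z)) \<le> S (insert z A) + S (B \<union> Z)"
    using A B sub by (intro entropy_function_submodular[OF ent]) auto
  moreover have "insert z A \<inter> (B \<union> Z) = A \<inter> B" "insert z A \<union> (B \<union> Z) = A \<union> B \<union> insert z Z"
    using A B disj \<open>z \<notin> Z\<close> by auto
  ultimately show "\<bar>sum g A + sum g B + r\<bar> \<le> S (insert z A) + S (B \<union> Z)"
    using union_inter bounds(3,4) by auto
qed

lemma EDF_with_block_admissible_value:
  assumes ent: "entropy_function X S"
    and sub: "X' \<union> insert z Z \<subseteq> X" and "X' \<inter> insert z Z = {}" "z \<notin> Z"
    and "EDF_with_block S X' (insert z Z) g r"
  obtains t where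
    "\<And>A. A \<subseteq> X' \<Longrightarrow> \<bar>sum g A + t\<bar> \<le> S (insert z A) \<and> \<bar>sum g A + r - t\<bar> \<le> S (A \<union> Z)"
proof -
  define l where "l A = max (- S (insert z A) - sum g A) (sum g A + r - S (A \<union> Z))" for A
  define u where "u A = min (S (insert z A) - sum g A) (sum g A + r + S (A \<union> Z))" for A
  have "finite (Pow X')" using sub entropy_function_finite[OF ent] by (auto intro: finite_subset)
  moreover have "l A \<le> u B" if "A \<in> Pow X'" "B \<in> Pow X'" for A B
  proof -
    from that have A: "A \<subseteq> X'" and B: "B \<subseteq> X'" by auto
    note AB = EDF_with_block_pair_bounds[OF assms A B]
      and BA = EDF_with_block_pair_bounds[OF assms B A]
    from AB BA show ?thesis
      unfolding l_def u_def max.bounded_iff min.bounded_iff abs_le_iff by (intro conjI) linarith+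
  qed
  ultimately obtain t where t: "\<forall>A\<in>Pow X'. l A \<le> t \<and> t \<le> u A"
    using pairwise_meeting_intervals_common_point[of "Pow X'" l u] by blast
  show thesis
  proof (rule that)
    fix A assume "A \<subseteq> X'"
    then have "l A \<le> t" "t \<le> u A" using t by auto
    then show "\<bar>sum g A + t\<bar> \<le> S (insert z A) \<and> \<bar>sum g A + r - t\<bar> \<le> S (A \<union> Z)"
      unfolding l_def u_def max.bounded_iff min.bounded_iff abs_le_iff by (intro conjI) linarith+
  qed
qed

lemma EDF_with_block_split_element:
  assumes ent: "entropy_function X S"
    and sub: "X' \<union> insert z Z \<subseteq> X" and "X' \<inter> insert z Z = {}" "z \<notin> Z"
    and blk: "EDF_with_block S X' (insert z Z) g r"
  obtains t where "EDF_with_block S (insert z X') Z (g(z := t)) (r - t)"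
proof -
  obtain t where t:
    "\<And>A. A \<subseteq> X' \<Longrightarrow> \<bar>sum g A + t\<bar> \<le> S (insert z A) \<and> \<bar>sum g A + r - t\<bar> \<le> S (A \<union> Z)"
    using EDF_with_block_admissible_value[OF assms] by blast
  have "finite X'" using sub entropy_function_finite[OF ent] by (auto intro: finite_subset)
  have sum_upd: "sum (g(z := t)) B = sum g B" if "z \<notin> B" for B
    using that by (intro sum.cong) auto
  have "\<bar>sum (g(z := t)) A\<bar> \<le> S A \<and> \<bar>sum (g(z := t)) A + (r - t)\<bar> \<le> S (A \<union> Z)"
    if A: "A \<subseteq> insert z X'" for A
  proof (cases "z \<in> A")
    case True
    define A' where "A' = A - {z}"
    have A': "A' \<subseteq> X'" "A = insert z A'" "z \<notin> A'" "finite A'"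
      using A True \<open>finite X'\<close> unfolding A'_def by (auto intro: finite_subset)
    have "sum (g(z := t)) A = t + sum g A'"
      using A' sum_upd[of A'] by simp
    moreover have "\<bar>sum g A' + r\<bar> \<le> S (A' \<union> insert z Z)"
      using blk A' unfolding EDF_with_block_def by blast
    moreover have "A' \<union> insert z Z = A \<union> Z" using A' by auto
    ultimately show ?thesis using t[OF A'(1)] A' by (simp add: add.commute)
  next
    case False
    then have "A \<subseteq> X'" using A by auto
    moreover have "sum (g(z := t)) A = sum g A" using False sum_upd by blast
    ultimately show ?thesis
      using t blk unfolding EDF_with_block_def by (simp add: add_diff_eq)
  qed
  then show thesis
    by (intro that[of t]) (simp add: EDF_with_block_def)
qed

lemma EDF_with_block_extend:
  assumes ent: "entropy_function X S"
    and "X' \<union> Z \<subseteq> X" "X' \<inter> Z = {}" "EDF_with_block S X' Z g r"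
  shows "\<exists>f. (\<forall>x\<in>X'. f x = g x) \<and> sum f Z = r \<and> EDF (X' \<union> Z) S f"
proof -
  have "finite Z" using assms(2) entropy_function_finite[OF ent] by (auto intro: finite_subset)
  from this assms(2-4) show ?thesis
  proof (induction Z arbitrary: X' g r rule: finite_induct)
    case empty
    have "\<bar>sum g {} + r\<bar> \<le> S ({} \<union> {})"
      using empty.prems(3) unfolding EDF_with_block_def by blast
    then have "\<bar>r\<bar> \<le> S {}" by simp
    moreover have "S {} = 0" using ent by (simp add: entropy_function_def)
    moreover have "EDF X' S g"
      using empty.prems(3) unfolding EDF_with_block_def EDF_def by blast
    ultimately show ?case by (intro exI[of _ g]) simp
  next
    case (insert z Z)
    obtain t where blk: "EDF_with_block S (insert z X') Z (g(z := t)) (r - t)"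
      using EDF_with_block_split_element[OF ent insert.prems(1,2) insert.hyps(2) insert.prems(3)] .
    have "insert z X' \<union> Z \<subseteq> X" "insert z X' \<inter> Z = {}"
      using insert.prems(1,2) insert.hyps(2) by auto
    from insert.IH[OF this blk] obtain f where f: "\<forall>x\<in>insert z X'. f x = (g(z := t)) x"
        "sum f Z = r - t" "EDF (insert z X' \<union> Z) S f"
      by blast
    have "z \<notin> X'" using insert.prems(2) by auto
    then have "\<forall>x\<in>X'. f x = g x" using f(1) by auto
    moreover have "sum f (insert z Z) = r" using f(1,2) insert.hyps by simp
    moreover have "EDF (X' \<union> insert z Z) S f"
      using f(3) by simp
    ultimately show ?case by blast
  qed
qed

theorem theorem24:
  fixes X X' :: "'a set" and R :: 'a and S :: "'a set \<Rightarrow> real" and g :: "'a \<Rightarrow> real"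
  assumes "entropy_function X S"
    and "X' \<subseteq> X"
    and "R \<notin> X"
    and "EDF (insert R X') (merged_entropy X X' R S) g"
  shows "\<exists>f. EDF X S f \<and> (\<forall>x\<in>X'. f x = g x) \<and> (\<Sum>x\<in>X - X'. f x) = g R"
proof -
  have "finite X'" using assms(2) entropy_function_finite[OF assms(1)] by (rule finite_subset)
  moreover have "R \<notin> X'" using assms(2,3) by blast
  ultimately have "EDF_with_block S X' (X - X') g (g R)"
    using assms(4) by (rule EDF_merged_entropy_imp_EDF_with_block)
  moreover have "X' \<union> (X - X') = X" "X' \<inter> (X - X') = {}" using assms(2) by auto
  ultimately obtain f where "\<forall>x\<in>X'. f x = g x" "sum f (X - X') = g R" "EDF X S f"
    using EDF_with_block_extend[OF assms(1), of X' "X - X'" g "g R"] by auto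
  then show ?thesis by blast
qed

end
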